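(* For every $n\ge3$ and every integer $k$ with $1<k<n$ there exists a positive semidefinite $n\times n$ matrix of rank $k$ which is perfect copositive.
   Context: $\mathcal{S}^n$: real symmetric $n\times n$ matrices; $B[v]=v^\top Bv$; $\mathcal{COP}^n=\{B\in\mathcal{S}^n: B[x]\ge0\ \forall x\in\mathbb{R}^n_{\ge0}\}$; strictly copositive means lying in the interior of $\mathcal{COP}^n$. $\min_{\mathcal{COP}}B=\inf\{B[v]: v\in\mathbb{Z}^n_{\ge0}\setminus\{0\}\}$, $\operatorname{Min}_{\mathcal{COP}}B=\{v\in\mathbb{Z}^n_{\ge0}: B[v]=\min_{\mathcal{COP}}B\}$. A strictly copositive $P$ is perfect copositive if it is the unique $Q\in\mathcal{S}^n$ with $Q[v]=\min_{\mathcal{COP}}P$ for all $v\in\operatorname{Min}_{\mathcal{COP}}P$. *)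

theory Defs
  imports "HOL-Analysis.Analysis"
begin

definition sym_mat :: "real^'n^'n \<Rightarrow> bool" where
  "sym_mat B \<longleftrightarrow> transpose B = B"

definition qform :: "real^'n^'n \<Rightarrow> real^'n \<Rightarrow> real" where
  "qform B v = v \<bullet> (B *v v)"

definition nonneg_vec :: "real^'n \<Rightarrow> bool" where
  "nonneg_vec x \<longleftrightarrow> (\<forall>i. x $ i \<ge> 0)"

definition nonneg_int_vec :: "real^'n \<Rightarrow> bool" where
  "nonneg_int_vec v \<longleftrightarrow> (\<forall>i. v $ i \<in> \<int> \<and> v $ i \<ge> 0)"

definition copositive :: "real^'n^'n \<Rightarrow> bool" where
  "copositive B \<longleftrightarrow> sym_mat B \<and> (\<forall>x. nonneg_vec x \<longrightarrow> qform B x \<ge> 0)"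

text \<open>Interior of the copositive cone, taken within the space of symmetric matrices.\<close>
definition strictly_copositive :: "real^'n^'n \<Rightarrow> bool" where
  "strictly_copositive B \<longleftrightarrow> sym_mat B \<and>
     (\<exists>e>0. \<forall>Q. sym_mat Q \<and> norm (Q - B) < e \<longrightarrow> copositive Q)"

definition min_cop :: "real^'n^'n \<Rightarrow> real" where
  "min_cop B = Inf {qform B v | v. nonneg_int_vec v \<and> v \<noteq> 0}"

definition Min_cop :: "real^'n^'n \<Rightarrow> (real^'n) set" where
  "Min_cop B = {v. nonneg_int_vec v \<and> qform B v = min_cop B}"

definition perfect_copositive :: "real^'n^'n \<Rightarrow> bool" where
  "perfect_copositive P \<longleftrightarrow> strictly_copositive P \<and>
     (\<forall>Q. sym_mat Q \<longrightarrow> ((\<forall>v\<in>Min_cop P. qform Q v = min_cop P) \<longleftrightarrow> Q = P))"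

definition psd :: "real^'n^'n \<Rightarrow> bool" where
  "psd B \<longleftrightarrow> sym_mat B \<and> (\<forall>x. qform B x \<ge> 0)"

end

theory Submission
  imports Defs
begin

text \<open>Split the indices into a head h 0, ..., h (k - 2) and a nonempty tail T. Put a 0 = a (k + 1) = 0,
  a l = e (h (l - 1)) for 0 < l < k and a k = 1_T - e (h (k - 2)), and let
  P = 1/2 * (\<Sum>l\<le>k. (a l - a (l + 1)) (a l - a (l + 1))^T), the pull-back of the root form of A_k
  along x \<mapsto> (a 1 \<bullet> x, ..., a k \<bullet> x). Then P is positive semidefinite of rank k and positive on
  nonzero nonnegative vectors, hence strictly copositive. On a nonnegative integer vector v the
  numbers (a l - a (l + 1)) \<bullet> v are integers with sum 0, so P[v] \<ge> 1, with equality when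
  (a l \<bullet> v) is the indicator of an interval.

  For t, u \<in> T the vectors w j = e (h j) (j < k - 2), w (k - 2) = e (h (k - 2)) + e t,
  w (k - 1) = e u are dual to a 1, ..., a k, so all their consecutive sums are minimal vectors.
  If a symmetric D vanishes on the minimal vectors, second differences along these sums give
  w i \<bullet> D w j = 0, and letting t and u vary this forces D = 0.\<close>

lemma inner_matrix_commute:
  assumes "sym_mat D" shows "x \<bullet> (D *v y) = y \<bullet> (D *v x)"
proof -
  have "x \<bullet> (D *v y) = (x v* D) \<bullet> y" by (simp add: dot_lmul_matrix)
  also have "x v* D = D *v x"
    using assms vector_transpose_matrix[of x D] unfolding sym_mat_def by simp
  finally show ?thesis by (simp add: inner_commute)
qed

lemma qform_add:
  assumes "sym_mat D"
  shows "qform D (x + y) = qform D x + 2 * (x \<bullet> (D *v y)) + qform D y"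
  using inner_matrix_commute[OF assms, of x y]
  unfolding qform_def by (simp add: matrix_vector_right_distrib inner_add_left inner_add_right)

lemma qform_diff_matrix: "qform (Q - P) v = qform Q v - qform P v"
  unfolding qform_def by (simp add: matrix_vector_mult_diff_rdistrib inner_diff_right)

lemma qform_scaleR: "qform D (c *\<^sub>R x) = c\<^sup>2 * qform D x"
  unfolding qform_def by (simp add: matrix_vector_mult_scaleR power2_eq_square)

lemma abs_qform_le:
  fixes M :: "real^'n^'n"
  shows "\<bar>qform M x\<bar> \<le> real CARD('n) * real CARD('n) * norm M * (norm x)\<^sup>2"
proof -
  have "\<bar>M $ i $ j\<bar> \<le> norm M" for i j
    using component_le_norm_cart[of "M $ i" j] Finite_Cartesian_Product.norm_nth_le[of M i] by linarith
  then have "onorm ((*v) M) \<le> real CARD('n) * real CARD('n) * norm M"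
    by (rule onorm_le_matrix_component)
  then have "norm (M *v x) \<le> real CARD('n) * real CARD('n) * norm M * norm x"
    using onorm[OF matrix_vector_mul_bounded_linear, of M x] by (meson mult_right_mono norm_ge_zero order_trans)
  moreover have "\<bar>qform M x\<bar> \<le> norm x * norm (M *v x)"
    unfolding qform_def by (rule Cauchy_Schwarz_ineq2)
  ultimately show ?thesis
    by (smt (verit, best) mult.commute mult_left_mono norm_ge_zero power2_eq_square mult.assoc)
qed

text \<open>A form positive on the compact set of nonnegative unit vectors is bounded below there by
  some c > 0, and by the entrywise bound above every symmetric Q with norm (Q - P) < c / n^2 is
  still nonnegative on that set.\<close>
lemma strictly_copositive_if_pos:
  fixes P :: "real^'n^'n"
  assumes "sym_mat P" and pos: "\<And>x. nonneg_vec x \<Longrightarrow> x \<noteq> 0 \<Longrightarrow> 0 < qform P x"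
  shows "strictly_copositive P"
proof -
  define K where "K = {x::real^'n. \<forall>i. 0 \<le> x $ i} \<inter> sphere 0 1"
  have "compact K"
    unfolding K_def
    by (intro closed_Int_compact compact_sphere closed_Collect_all closed_Collect_le continuous_intros)
  moreover have "axis undefined 1 \<in> K" by (simp add: K_def) (simp add: axis_def)
  moreover have "continuous_on K (qform P)"
    unfolding qform_def by (intro continuous_intros)
  ultimately obtain x0 where x0: "x0 \<in> K" "\<And>y. y \<in> K \<Longrightarrow> qform P x0 \<le> qform P y"
    using continuous_attains_inf by (metis empty_iff)
  define c where "c = qform P x0"
  have "0 < c"
    unfolding c_def using x0(1) pos by (force simp: K_def nonneg_vec_def)
  define N where "N = real CARD('n) * real CARD('n)"
  have "0 < N" by (simp add: N_def)
  have "copositive Q" if Q: "sym_mat Q" "norm (Q - P) < c / N" for Q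
    unfolding copositive_def
  proof (intro conjI allI impI Q(1))
    fix x :: "real^'n" assume x: "nonneg_vec x"
    show "0 \<le> qform Q x"
    proof (cases "x = 0")
      case False
      define u where "u = x /\<^sub>R norm x"
      have "u \<in> K" using x False by (simp add: K_def u_def nonneg_vec_def)
      have "\<bar>qform (Q - P) u\<bar> \<le> N * norm (Q - P)"
        using abs_qform_le[of "Q - P" u] \<open>u \<in> K\<close> by (simp add: N_def K_def)
      also have "\<dots> \<le> c" using Q(2) \<open>0 < N\<close> by (simp add: field_simps)
      finally have "0 \<le> qform Q u"
        using x0(2)[OF \<open>u \<in> K\<close>] unfolding qform_diff_matrix c_def by linarith
      moreover have "x = norm x *\<^sub>R u" using False by (simp add: u_def)
      ultimately show ?thesis by (metis qform_scaleR zero_le_power2 zero_le_mult_iff)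
    qed (simp add: qform_def)
  qed
  then show ?thesis
    unfolding strictly_copositive_def using \<open>sym_mat P\<close> \<open>0 < c\<close> \<open>0 < N\<close>
    by (metis divide_pos_pos)
qed

lemma qform_second_difference:
  assumes "sym_mat D"
  shows "qform D (a + x + b) - qform D (a + x) - qform D (x + b) + qform D x = 2 * (a \<bullet> (D *v b))"
  using assms by (simp add: qform_add inner_matrix_commute[OF assms, of x a] algebra_simps)

lemma inner_matrix_eq_0_if_qform_intervals_eq_0_le:
  fixes w :: "nat \<Rightarrow> real^'n"
  assumes D: "sym_mat D"
    and intervals: "\<And>i j. i \<le> j \<Longrightarrow> j < m \<Longrightarrow> qform D (\<Sum>l=i..j. w l) = 0"
    and "i \<le> j" "j < m"
  shows "w i \<bullet> (D *v w j) = 0"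
proof (cases "i = j")
  case True
  then show ?thesis using intervals[of j j] assms(4) by (simp add: qform_def)
next
  case False
  then obtain j' where j': "j = Suc j'" "i \<le> j'" using \<open>i \<le> j\<close> by (cases j) auto
  define x where "x = (\<Sum>l=Suc i..j'. w l)"
  have "(\<Sum>l=i..j'. w l) = w i + x" unfolding x_def using j' by (simp add: sum.atLeast_Suc_atMost)
  then have split: "(\<Sum>l=i..j. w l) = w i + x + w j" "(\<Sum>l=i..j'. w l) = w i + x"
    "(\<Sum>l=Suc i..j. w l) = x + w j"
    unfolding x_def using j' by simp_all
  have "qform D x = 0"
  proof (cases "Suc i \<le> j'")
    case True then show ?thesis unfolding x_def using intervals j' \<open>j < m\<close> by simp
  qed (simp add: x_def qform_def)
  then show ?thesis
    using qform_second_difference[OF D, of "w i" x "w j"] split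
      intervals[of i j] intervals[of i j'] intervals[of "Suc i" j] assms(3,4) j'
    by simp
qed

lemma inner_matrix_eq_0_if_qform_intervals_eq_0:
  fixes w :: "nat \<Rightarrow> real^'n"
  assumes "sym_mat D"
    and "\<And>i j. i \<le> j \<Longrightarrow> j < m \<Longrightarrow> qform D (\<Sum>l=i..j. w l) = 0"
    and "i < m" "j < m"
  shows "w i \<bullet> (D *v w j) = 0"
  using inner_matrix_eq_0_if_qform_intervals_eq_0_le[OF assms(1,2)] inner_matrix_commute[OF assms(1)] assms(3,4)
  by (metis nle_le)

lemma matrix_eq_0_if_inner_eq_0_on_spanning_set:
  fixes D :: "real^'n^'n"
  assumes B: "\<And>x y. x \<in> B \<Longrightarrow> y \<in> B \<Longrightarrow> x \<bullet> (D *v y) = 0"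
    and span: "\<And>i. axis i 1 \<in> span B"
  shows "D = 0"
proof -
  have "D *v y = 0" if "y \<in> B" for y
  proof -
    have "orthogonal (D *v y) (axis i 1)" for i
      by (rule orthogonal_to_span[OF span]) (use B[OF _ that] in \<open>simp add: orthogonal_def inner_commute\<close>)
    then show ?thesis by (simp add: orthogonal_def inner_axis vec_eq_iff)
  qed
  then have "D *v axis j 1 = 0" for j
    using linear_eq_0_on_span[OF matrix_vector_mul_linear _ span] by blast
  then show ?thesis
    by (simp add: vec_eq_iff matrix_vector_mult_basis column_def)
qed

lemma sum_squares_ge_2_if_Ints_sum_eq_0:
  fixes z :: "nat \<Rightarrow> real"
  assumes "finite S" and Ints: "\<And>l. l \<in> S \<Longrightarrow> z l \<in> \<int>" and "sum z S = 0"
    and "l0 \<in> S" "z l0 \<noteq> 0"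
  shows "2 \<le> (\<Sum>l\<in>S. (z l)\<^sup>2)"
proof -
  have abs_le_sq: "\<bar>z l\<bar> \<le> (z l)\<^sup>2" if "l \<in> S" for l
  proof (cases "z l = 0")
    case False
    then have "1 \<le> \<bar>z l\<bar>" using Ints_nonzero_abs_ge1 Ints that by blast
    then have "\<bar>z l\<bar> * 1 \<le> \<bar>z l\<bar> * \<bar>z l\<bar>" by (intro mult_left_mono) auto
    then show ?thesis by (simp add: power2_eq_square)
  qed simp
  have "1 \<le> \<bar>z l0\<bar>" using Ints_nonzero_abs_ge1 Ints assms(4,5) by blast
  moreover have "\<bar>z l0\<bar> = \<bar>sum z (S - {l0})\<bar>"
    using assms(1,3,4) by (simp add: sum.remove)
  moreover have "\<bar>sum z (S - {l0})\<bar> \<le> (\<Sum>l\<in>S - {l0}. \<bar>z l\<bar>)" by (rule sum_abs)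
  moreover have "(\<Sum>l\<in>S. \<bar>z l\<bar>) = \<bar>z l0\<bar> + (\<Sum>l\<in>S - {l0}. \<bar>z l\<bar>)"
    using assms(1,4) by (simp add: sum.remove)
  moreover have "(\<Sum>l\<in>S. \<bar>z l\<bar>) \<le> (\<Sum>l\<in>S. (z l)\<^sup>2)" by (rule sum_mono) (rule abs_le_sq)
  ultimately show ?thesis by linarith
qed

lemma nonneg_int_vec_sum:
  "(\<And>m. m \<in> S \<Longrightarrow> nonneg_int_vec (f m)) \<Longrightarrow> nonneg_int_vec (sum f S)"
  unfolding nonneg_int_vec_def by (auto intro: Ints_sum sum_nonneg)

lemma nonneg_int_vec_axis: "nonneg_int_vec (axis i (1::real))"
  unfolding nonneg_int_vec_def by (simp add: axis_def)

locale chain_form =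
  fixes a :: "nat \<Rightarrow> real^'n" and k :: nat
  assumes chain_0: "a 0 = 0" and chain_beyond: "\<And>l. k < l \<Longrightarrow> a l = 0"
begin

definition chain_matrix :: "real^'n^'n" where
  "chain_matrix = (\<chi> i j. (\<Sum>l\<le>k. (a l - a (Suc l)) $ i * (a l - a (Suc l)) $ j) / 2)"

definition dual_seq :: "(nat \<Rightarrow> real^'n) \<Rightarrow> bool" where
  "dual_seq w \<longleftrightarrow> (\<forall>l<k. \<forall>j<k. a (Suc l) \<bullet> w j = (if l = j then 1 else 0))"

lemma chain_matrix_mult:
  "chain_matrix *v x = (\<Sum>l\<le>k. ((a l - a (Suc l)) \<bullet> x / 2) *\<^sub>R (a l - a (Suc l)))"
proof -
  have "(chain_matrix *v x) $ i = (\<Sum>l\<le>k. ((a l - a (Suc l)) \<bullet> x / 2) * (a l - a (Suc l)) $ i)" for i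
  proof -
    have "(chain_matrix *v x) $ i
        = (\<Sum>j\<in>UNIV. \<Sum>l\<le>k. (a l - a (Suc l)) $ i * (a l - a (Suc l)) $ j * x $ j / 2)"
      by (simp add: chain_matrix_def matrix_vector_mult_def sum_divide_distrib sum_distrib_right)
    also have "\<dots> = (\<Sum>l\<le>k. \<Sum>j\<in>UNIV. (a l - a (Suc l)) $ i * (a l - a (Suc l)) $ j * x $ j / 2)"
      by (rule sum.swap)
    also have "\<dots> = (\<Sum>l\<le>k. ((a l - a (Suc l)) \<bullet> x / 2) * (a l - a (Suc l)) $ i)"
      by (simp add: inner_vec_def sum_divide_distrib sum_distrib_left sum_distrib_right mult_ac)
    finally show ?thesis .
  qed
  then show ?thesis by (simp add: vec_eq_iff)
qed

lemma qform_chain_matrix: "qform chain_matrix x = (\<Sum>l\<le>k. (a l \<bullet> x - a (Suc l) \<bullet> x)\<^sup>2) / 2"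
  by (simp add: qform_def chain_matrix_mult inner_sum_right sum_divide_distrib power2_eq_square
      inner_diff_left inner_diff_right inner_commute)

lemma sym_chain_matrix: "sym_mat chain_matrix"
  unfolding sym_mat_def chain_matrix_def transpose_def by (simp add: vec_eq_iff mult.commute)

lemma psd_chain_matrix: "psd chain_matrix"
  unfolding psd_def using sym_chain_matrix by (simp add: qform_chain_matrix sum_nonneg)

lemma qform_chain_matrix_eq_0_iff: "qform chain_matrix x = 0 \<longleftrightarrow> (\<forall>l. a l \<bullet> x = 0)"
proof
  assume "qform chain_matrix x = 0"
  then have step: "a l \<bullet> x = a (Suc l) \<bullet> x" if "l \<le> k" for l
    using that by (simp add: qform_chain_matrix sum_nonneg_eq_0_iff)
  show "\<forall>l. a l \<bullet> x = 0"
  proof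
    fix l show "a l \<bullet> x = 0"
    proof (induction l)
      case (Suc l)
      then show ?case using step[of l] chain_beyond[of "Suc l"] by (cases "l \<le> k") auto
    qed (simp add: chain_0)
  qed
qed (simp add: qform_chain_matrix)

lemma one_le_qform_chain_matrix:
  assumes "\<And>l. a l \<bullet> x \<in> \<int>" and "qform chain_matrix x \<noteq> 0"
  shows "1 \<le> qform chain_matrix x"
proof -
  define z where "z l = a l \<bullet> x - a (Suc l) \<bullet> x" for l
  have "(\<Sum>l\<le>k. (z l)\<^sup>2) \<noteq> 0" using assms(2) by (simp add: qform_chain_matrix z_def)
  then obtain l0 where "l0 \<le> k" "z l0 \<noteq> 0"
    by (metis (mono_tags, lifting) atMost_iff power_zero_numeral sum.neutral)
  moreover have "sum z {..k} = 0"
    unfolding z_def using sum_telescope[of "\<lambda>l. a l \<bullet> x" k] by (simp add: chain_0 chain_beyond)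
  ultimately have "2 \<le> (\<Sum>l\<le>k. (z l)\<^sup>2)"
    by (intro sum_squares_ge_2_if_Ints_sum_eq_0) (auto simp: z_def assms(1))
  then show ?thesis by (simp add: qform_chain_matrix z_def)
qed

lemma qform_chain_matrix_interval:
  assumes "dual_seq w" "i \<le> j" "j < k"
  shows "qform chain_matrix (\<Sum>m=i..j. w m) = 1"
proof -
  have "a l \<bullet> (\<Sum>m=i..j. w m) = (if Suc i \<le> l \<and> l \<le> Suc j then 1 else 0)" for l
  proof (cases l)
    case (Suc l')
    show ?thesis
    proof (cases "l' < k")
      case True
      then have "a l \<bullet> (\<Sum>m=i..j. w m) = (\<Sum>m=i..j. if l' = m then 1 else 0)"
        using assms(1,3) Suc by (simp add: inner_sum_right dual_seq_def)
      then show ?thesis using Suc by simp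
    qed (use Suc assms in \<open>simp add: chain_beyond\<close>)
  qed (simp add: chain_0)
  then have "(a l \<bullet> (\<Sum>m=i..j. w m) - a (Suc l) \<bullet> (\<Sum>m=i..j. w m))\<^sup>2
      = (if l = i then 1 else 0) + (if l = Suc j then 1 else 0)" for l
    using assms(2) by auto
  then show ?thesis using assms by (simp add: qform_chain_matrix sum.distrib)
qed

lemma rank_chain_matrix:
  assumes w: "dual_seq w"
  shows "rank chain_matrix = k"
proof -
  define V where "V = a ` {1..k}"
  have a_span: "a l \<in> span V" for l
    unfolding V_def by (cases "l = 0 \<or> k < l") (auto simp: chain_0 chain_beyond intro: span_base span_zero)
  have dual: "a l \<bullet> w (l' - 1) = (if l = l' then 1 else 0)" if "l \<in> {1..k}" "l' \<in> {1..k}" for l l'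
    using w that unfolding dual_seq_def
    by (metis (no_types, lifting) One_nat_def Suc_pred atLeastAtMost_iff diff_Suc_1 less_eq_Suc_le not_less_eq_eq)
  have inj: "inj_on a {1..k}"
    by (rule inj_onI) (metis dual one_neq_zero)
  have "independent V"
  proof (rule independent_if_scalars_zero)
    show "finite V" unfolding V_def by simp
    fix f x assume sum0: "(\<Sum>y\<in>V. f y *\<^sub>R y) = 0" and "x \<in> V"
    then obtain l where l: "l \<in> {1..k}" "x = a l" unfolding V_def by blast
    have "0 = (\<Sum>y\<in>V. f y * (y \<bullet> w (l - 1)))"
      using arg_cong[OF sum0, of "\<lambda>v. v \<bullet> w (l - 1)"] by (simp add: inner_sum_left)
    also have "\<dots> = (\<Sum>l'\<in>{1..k}. f (a l') * (a l' \<bullet> w (l - 1)))"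
      by (simp only: V_def sum.reindex[OF inj] comp_def)
    also have "\<dots> = (\<Sum>l'\<in>{1..k}. if l' = l then f (a l') else 0)"
      using dual l(1) by (intro sum.cong) auto
    also have "\<dots> = f x" using l by simp
    finally show "f x = 0" by simp
  qed
  then have "dim (span V) = card V" by (rule dim_span_eq_card_independent)
  also have "card V = k" unfolding V_def using card_image[OF inj] by simp
  finally have dim_V: "dim (span V) = k" .
  have "range ((*v) chain_matrix) \<subseteq> span V"
    by (auto simp: chain_matrix_mult intro!: span_sum span_mul span_diff a_span)
  then have "dim (range ((*v) chain_matrix)) \<le> dim (span V)" by (rule dim_subset)
  moreover have "inj_on ((*v) chain_matrix) (span V)"
  proof (rule linear_inj_on_iff_eq_0[OF matrix_vector_mul_linear subspace_span, THEN iffD2], intro ballI impI)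
    fix x assume x: "x \<in> span V" "chain_matrix *v x = 0"
    then have "\<forall>l. a l \<bullet> x = 0"
      by (simp add: qform_chain_matrix_eq_0_iff[symmetric] qform_def)
    then have "orthogonal x x"
      by (intro orthogonal_to_span[OF x(1)]) (auto simp: V_def orthogonal_def inner_commute)
    then show "x = 0" by (simp add: orthogonal_def)
  qed
  then have "dim ((*v) chain_matrix ` span V) = dim (span V)"
    by (intro dim_image_eq[OF matrix_vector_mul_linear]) (simp only: span_span)
  moreover have "dim ((*v) chain_matrix ` span V) \<le> dim (range ((*v) chain_matrix))"
    by (rule dim_subset) auto
  ultimately show ?thesis unfolding rank_dim_range dim_V by linarith
qed

end

locale head_tail_chain =
  fixes h :: "nat \<Rightarrow> 'n::finite" and k :: nat
  assumes two_le_k: "2 \<le> k" and inj_head: "inj_on h {..k - 2}"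
    and tail_nonempty: "h ` {..k - 2} \<noteq> UNIV"
begin

definition tail :: "'n set" where
  "tail = - h ` {..k - 2}"

definition chain :: "nat \<Rightarrow> real^'n" where
  "chain l = (if l = 0 \<or> k < l then 0 else if l < k then axis (h (l - 1)) 1
     else (\<Sum>c\<in>tail. axis c 1) - axis (h (k - 2)) 1)"

definition dual :: "'n \<Rightarrow> 'n \<Rightarrow> nat \<Rightarrow> real^'n" where
  "dual t u j = (if j < k - 2 then axis (h j) 1
     else if j = k - 2 then axis (h (k - 2)) 1 + axis t 1 else axis u 1)"

sublocale chain_form chain k
  by unfold_locales (simp_all add: chain_def)

lemma ex_in_tail: "\<exists>t. t \<in> tail"
  using tail_nonempty by (auto simp: tail_def)

lemma head_eq_iff: "i \<le> k - 2 \<Longrightarrow> j \<le> k - 2 \<Longrightarrow> h i = h j \<longleftrightarrow> i = j"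
  using inj_head by (auto simp: inj_on_def)

lemma head_notin_tail: "j \<le> k - 2 \<Longrightarrow> h j \<notin> tail"
  by (simp add: tail_def)

lemma inner_chain_head: "l < k - 1 \<Longrightarrow> chain (Suc l) \<bullet> x = x $ h l"
  by (simp add: chain_def inner_axis' less_diff_conv)

lemma inner_chain_last: "chain k \<bullet> x = (\<Sum>c\<in>tail. x $ c) - x $ h (k - 2)"
  using two_le_k by (simp add: chain_def inner_axis' inner_diff_left inner_sum_left)

lemma sum_tail_axis: "(\<Sum>c'\<in>tail. axis c 1 $ c') = (if c \<in> tail then 1 else (0::real))"
  by (simp add: axis_def)

lemma dual_seq_dual:
  assumes "t \<in> tail" "u \<in> tail"
  shows "dual_seq (dual t u)"
  unfolding dual_seq_def
proof (intro allI impI)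
  fix l j assume "l < k" "j < k"
  then consider "l < k - 1" | "l = k - 1" by linarith
  then show "chain (Suc l) \<bullet> dual t u j = (if l = j then 1 else 0)"
  proof cases
    case 1
    then show ?thesis using assms head_notin_tail \<open>j < k\<close>
      by (auto simp: inner_chain_head dual_def axis_def head_eq_iff)
  next
    case 2
    then have "Suc l = k" using two_le_k by linarith
    then show ?thesis using assms head_notin_tail two_le_k \<open>j < k\<close> 2
      by (auto simp: inner_chain_last dual_def sum.distrib sum_tail_axis axis_def head_eq_iff)
  qed
qed

lemma eq_0_if_nonneg_and_inner_chain_eq_0:
  assumes "nonneg_vec x" and chain0: "\<And>l. chain l \<bullet> x = 0"
  shows "x = 0"
proof -
  have head: "x $ h j = 0" if "j \<le> k - 2" for j
    using chain0[of "Suc j"] that two_le_k by (simp add: inner_chain_head)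
  then have "(\<Sum>c\<in>tail. x $ c) = 0"
    using chain0[of k] by (simp add: inner_chain_last)
  then have tail: "x $ c = 0" if "c \<in> tail" for c
    using assms(1) that by (simp add: nonneg_vec_def sum_nonneg_eq_0_iff)
  show ?thesis
    unfolding vec_eq_iff using head tail by (metis ComplI imageE atMost_iff tail_def zero_index)
qed

lemma Ints_inner_chain:
  assumes "\<And>c. x $ c \<in> \<int>"
  shows "chain l \<bullet> x \<in> \<int>"
proof -
  consider "l = 0 \<or> k < l" | l' where "l = Suc l'" "l' < k - 1" | "l = k"
    by (metis Suc_pred' less_diff_conv linorder_neqE_nat not_less_eq not_less_zero)
  then show ?thesis
    by cases (use assms in \<open>auto simp: chain_0 chain_beyond inner_chain_head inner_chain_last\<close>)
qed

lemma qform_chain_matrix_pos: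
  assumes "nonneg_vec x" "x \<noteq> 0"
  shows "0 < qform chain_matrix x"
  using psd_chain_matrix eq_0_if_nonneg_and_inner_chain_eq_0[OF assms(1)] assms(2)
  by (auto simp: psd_def qform_chain_matrix_eq_0_iff order_le_less)

lemma one_le_qform_chain_matrix_nonneg_int:
  assumes "nonneg_int_vec v" "v \<noteq> 0"
  shows "1 \<le> qform chain_matrix v"
proof (rule one_le_qform_chain_matrix)
  show "chain l \<bullet> v \<in> \<int>" for l
    using assms(1) by (intro Ints_inner_chain) (simp add: nonneg_int_vec_def)
  have "nonneg_vec v" using assms(1) by (simp add: nonneg_vec_def nonneg_int_vec_def)
  then show "qform chain_matrix v \<noteq> 0" using qform_chain_matrix_pos assms(2) by fastforce
qed

lemma nonneg_int_vec_dual: "nonneg_int_vec (dual t u j)"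
  unfolding dual_def by (auto simp: nonneg_int_vec_def axis_def)

lemma dual_last: "dual t u (Suc (k - 2)) = axis u 1"
  by (simp add: dual_def)

lemma min_cop_chain_matrix: "min_cop chain_matrix = 1"
  unfolding min_cop_def
proof (rule cInf_eq_minimum)
  obtain t where "t \<in> tail" using ex_in_tail by blast
  then have "qform chain_matrix (axis t 1) = 1"
    using qform_chain_matrix_interval[OF dual_seq_dual, of t t "Suc (k - 2)" "Suc (k - 2)"] two_le_k
    by (simp add: dual_last)
  then show "1 \<in> {qform chain_matrix v |v. nonneg_int_vec v \<and> v \<noteq> 0}"
    using nonneg_int_vec_axis by (metis (mono_tags, lifting) axis_eq_0_iff mem_Collect_eq zero_neq_one)
qed (use one_le_qform_chain_matrix_nonneg_int in blast)

lemma dual_interval_in_Min_cop: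
  assumes "t \<in> tail" "u \<in> tail" "i \<le> j" "j < k"
  shows "(\<Sum>m=i..j. dual t u m) \<in> Min_cop chain_matrix"
  using qform_chain_matrix_interval[OF dual_seq_dual[OF assms(1,2)] assms(3,4)]
  by (simp add: Min_cop_def min_cop_chain_matrix nonneg_int_vec_sum nonneg_int_vec_dual)

lemma dual_head: "j \<le> k - 2 \<Longrightarrow> dual t u j = dual t t j"
  by (simp add: dual_def)

lemma dual_before_last: "dual t u (k - 2) = axis (h (k - 2)) 1 + axis t 1"
  by (simp add: dual_def)

text \<open>The dual vectors for the pairs (t, u) and (u, u) differ only in position k - 2,
  which isolates the entry D t u of two distinct tail indices.\<close>
lemma matrix_eq_0_if_dual_pairs_eq_0:
  fixes D :: "real^'n^'n"
  assumes D: "sym_mat D"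
    and pairs: "\<And>t u i j. t \<in> tail \<Longrightarrow> u \<in> tail \<Longrightarrow> i < k \<Longrightarrow> j < k \<Longrightarrow>
      dual t u i \<bullet> (D *v dual t u j) = 0"
  shows "D = 0"
proof -
  obtain t0 where t0: "t0 \<in> tail" using ex_in_tail by blast
  have last: "k - 2 < k" "Suc (k - 2) < k" using two_le_k by linarith+
  have tail_pairs: "axis t 1 \<bullet> (D *v axis u 1) = 0" if "t \<in> tail" "u \<in> tail" for t u
    using pairs[OF that last] pairs[OF that(2) that(2) last] pairs[OF that(2) that(2) last(2) last(2)]
    by (simp add: dual_last dual_before_last inner_add_left)
  define B where "B = dual t0 t0 ` {..k - 2} \<union> (\<lambda>u. axis u 1) ` tail"
  show ?thesis
  proof (rule matrix_eq_0_if_inner_eq_0_on_spanning_set)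
    have head_pairs: "dual t0 t0 i \<bullet> (D *v y) = 0" if "i \<le> k - 2" "y \<in> B" for i y
      using that(2) unfolding B_def
    proof (elim UnE imageE)
      fix u assume "u \<in> tail" "y = axis u 1"
      then show ?thesis
        using pairs[OF t0 \<open>u \<in> tail\<close>, of i "Suc (k - 2)"] that(1) last
        by (simp add: dual_head[of i t0 u] dual_last)
    qed (use pairs[OF t0 t0] that(1) last in auto)
    then show "x \<bullet> (D *v y) = 0" if "x \<in> B" "y \<in> B" for x y
      using that head_pairs tail_pairs inner_matrix_commute[OF D] by (auto simp: B_def)
  next
    fix c
    show "axis c 1 \<in> span B"
    proof (cases "c \<in> tail")
      case False
      then obtain j where j: "j \<le> k - 2" "c = h j" by (auto simp: tail_def)
      have "dual t0 t0 j \<in> span B" "axis t0 1 \<in> span B"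
        using j t0 by (auto simp: B_def intro: span_base)
      then show ?thesis
        using j span_diff[of "dual t0 t0 j" B "axis t0 1"]
        by (cases "j = k - 2") (auto simp: dual_def)
    qed (auto simp: B_def intro: span_base)
  qed
qed

lemma perfect_copositive_chain_matrix: "perfect_copositive chain_matrix"
  unfolding perfect_copositive_def
proof (intro conjI allI impI iffI)
  show "strictly_copositive chain_matrix"
    by (rule strictly_copositive_if_pos[OF sym_chain_matrix qform_chain_matrix_pos])
next
  fix Q :: "real^'n^'n"
  assume "sym_mat Q" and min: "\<forall>v\<in>Min_cop chain_matrix. qform Q v = min_cop chain_matrix"
  define D where "D = Q - chain_matrix"
  have D: "sym_mat D"
    using \<open>sym_mat Q\<close> sym_chain_matrix
    by (simp add: D_def sym_mat_def transpose_def vec_eq_iff)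
  have "qform D v = 0" if "v \<in> Min_cop chain_matrix" for v
    using min that by (simp add: D_def qform_diff_matrix Min_cop_def)
  then have "dual t u i \<bullet> (D *v dual t u j) = 0"
    if "t \<in> tail" "u \<in> tail" "i < k" "j < k" for t u i j
    using inner_matrix_eq_0_if_qform_intervals_eq_0[OF D _ that(3,4)] dual_interval_in_Min_cop[OF that(1,2)]
    by blast
  then have "D = 0" by (rule matrix_eq_0_if_dual_pairs_eq_0[OF D])
  then show "Q = chain_matrix" by (simp add: D_def)
qed (simp add: Min_cop_def)

lemma rank_chain_matrix_eq: "rank chain_matrix = k"
proof -
  obtain t where "t \<in> tail" using ex_in_tail by blast
  then show ?thesis using rank_chain_matrix dual_seq_dual by blast
qed

end

theorem corollary5p4:
  fixes k :: nat
  assumes "CARD('n::finite) \<ge> 3" and "1 < k" and "k < CARD('n)"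
  shows "\<exists>P :: real^'n^'n. psd P \<and> rank P = k \<and> perfect_copositive P"
proof -
  obtain h :: "nat \<Rightarrow> 'n" where h: "bij_betw h {..<CARD('n)} UNIV"
    using ex_bij_betw_nat_finite[of "UNIV :: 'n set"] by (auto simp: atLeast0LessThan)
  then have inj: "inj_on h {..k - 1}"
    using assms(3) by (auto simp: bij_betw_def intro: inj_on_subset)
  interpret head_tail_chain h k
  proof
    show "inj_on h {..k - 2}" using inj by (rule inj_on_subset) auto
    have "h (k - 1) \<noteq> h j" if "j \<le> k - 2" for j
    proof
      have "j \<in> {..k - 1}" "j \<noteq> k - 1" using that assms(2) by auto
      then show "h (k - 1) = h j \<Longrightarrow> False" using inj_onD[OF inj] by fastforce
    qed
    then have "h (k - 1) \<notin> h ` {..k - 2}" by auto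
    then show "h ` {..k - 2} \<noteq> UNIV" by blast
  qed (use assms(2) in simp)
  show ?thesis
    using psd_chain_matrix rank_chain_matrix_eq perfect_copositive_chain_matrix by blast
qed
end
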